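(* Let $f:\mathbb{R}^n\to\mathbb{R}$ be a convex function of class $C^2$. (i) Suppose $f\in\mathcal{F}$. Then for every increasing function $G:\mathbb{R}\to\mathbb{R}$ of class $C^1$ with $G(0)=0$, there exists $\phi\in\mathcal{F}$ such that: - for all $x$ with $\nabla f(x)\neq0$, $$\nabla\phi(x)=G(\|\nabla f(x)\|)\,\frac{\nabla f(x)}{\|\nabla f(x)\|}; \qquad (\ast)$$ - for all $x$ with $\nabla f(x)=0$, $\nabla\phi(x)=0$. (ii) Suppose there exist an increasing function $G:\mathbb{R}\to\mathbb{R}$ of class $C^1$ and a convex function $\phi:\mathbb{R}^n\to\mathbb{R}$ of class $C^2$ such that: - $G(0)=0$; - $sG'(s)-G(s)\neq0$ for almost every $s\in\mathbb{R}$; - $(\ast)$ holds at every $x$ with $\nabla f(x)\ne0$. Then $f\in\mathcal{F}$.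
   Context: $\|\cdot\|$ is the Euclidean norm on $\mathbb{R}^n$. $\mathcal{F}$ denotes the set of functions $f:\mathbb{R}^n\to\mathbb{R}$ such that: 1. $f$ is convex and of class $C^2$; 2. for every $x\in\mathbb{R}^n$ there exists $\lambda\in\mathbb{R}$ with $\mathrm{Hess}\,f(x)\,\nabla f(x)=\lambda\,\nabla f(x)$. *)

theory Defs
  imports "HOL-Analysis.Analysis"
begin

text \<open>Gradient of a real-valued function on R^n (meaningful where f is differentiable):
  the unique vector g with derivative h \<mapsto> h \<bullet> g.\<close>
definition grad :: "(real^'n \<Rightarrow> real) \<Rightarrow> real^'n \<Rightarrow> real^'n" where
  "grad f x = (THE g. (f has_derivative (\<lambda>h. h \<bullet> g)) (at x))"

definition Hess :: "(real^'n \<Rightarrow> real) \<Rightarrow> real^'n \<Rightarrow> real^'n^'n" where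
  "Hess f x = (THE M. (grad f has_derivative (\<lambda>h. M *v h)) (at x))"

definition C2 :: "(real^'n \<Rightarrow> real) \<Rightarrow> bool" where
  "C2 f \<longleftrightarrow> (\<forall>x. f differentiable (at x)) \<and> (\<forall>x. grad f differentiable (at x))
     \<and> continuous_on UNIV (Hess f)"

definition C1_real :: "(real \<Rightarrow> real) \<Rightarrow> bool" where
  "C1_real G \<longleftrightarrow> (\<forall>s. G differentiable (at s)) \<and> continuous_on UNIV (deriv G)"

definition classF :: "(real^'n \<Rightarrow> real) set" where
  "classF = {f. convex_on UNIV f \<and> C2 f \<and>
              (\<forall>x. \<exists>c::real. Hess f x *v grad f x = c *\<^sub>R grad f x)}"

end

theory Submission
  imports Defs
begin

text \<open>
  Write \<open>T\<^sub>G v = (G |v| / |v|) v\<close>. Its derivative at \<open>v\<close> is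
  \<open>h \<mapsto> (G r / r) h + k (v \<bullet> h) v\<close> with \<open>r = |v|\<close> and \<open>k = (r G' r - G r) / r\<^sup>3\<close>,
  so \<open>T\<^sub>G \<circ> \<nabla>f\<close> has Jacobian \<open>M = (G r / r) H + k v v\<^sup>T H\<close>, where \<open>v = \<nabla>f x\<close> and
  \<open>H = Hess f x\<close> is symmetric (Schwarz).

  (i) If \<open>H v\<close> is parallel to \<open>v\<close>, then \<open>M\<close> is symmetric, so \<open>T\<^sub>G \<circ> \<nabla>f\<close> is the gradient of
  its radial potential \<open>\<phi> x = \<integral>\<^sub>0\<^sup>1 T\<^sub>G (\<nabla>f (t x)) \<bullet> x dt\<close>; \<open>M\<close> is positive semidefinite
  because \<open>H\<close> is and \<open>G\<close> is increasing, so \<open>\<phi>\<close> is convex; and \<open>\<nabla>\<phi>\<close> is again an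
  eigenvector of \<open>M\<close>.

  (ii) Now \<open>M = Hess \<phi> x\<close> is symmetric, which forces \<open>k (H v \<bullet> h) |v|\<^sup>2 = k (v \<bullet> H v) (v \<bullet> h)\<close>,
  so \<open>H v \<parallel> v\<close> wherever \<open>k \<noteq> 0\<close>. On the open set where \<open>\<nabla>f \<noteq> 0\<close> and \<open>H v \<not>\<parallel> v\<close> we thus have
  \<open>k = 0\<close>, so \<open>|\<nabla>f|\<close> maps each ball of that set into the null set \<open>{s. s G' s = G s}\<close>;
  being continuous it is constant there, hence \<open>H v = \<nabla>(|\<nabla>f|\<^sup>2)/2 = 0\<close>, a contradiction.
\<close>

lemma linear_eq_inner_axis_image:
  fixes D :: "real^'n \<Rightarrow> real"
  assumes "linear D"
  shows "D h = h \<bullet> (\<chi> i. D (axis i 1))"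
proof -
  have "h = (\<Sum>i\<in>UNIV. h$i *\<^sub>R axis i 1)"
    using basis_expansion[of h] by (simp only: scalar_mult_eq_scaleR)
  hence "D h = D (\<Sum>i\<in>UNIV. h$i *\<^sub>R axis i 1)" by simp
  also have "\<dots> = (\<Sum>i\<in>UNIV. h$i * D (axis i 1))"
    using assms by (simp add: linear_sum linear_scale)
  also have "\<dots> = h \<bullet> (\<chi> i. D (axis i 1))" by (simp add: inner_vec_def)
  finally show ?thesis .
qed

lemma grad_eqI:
  assumes "(f has_derivative (\<lambda>h. h \<bullet> g)) (at x)"
  shows "grad f x = g"
  unfolding grad_def
proof (rule the_equality)
  fix g' assume "(f has_derivative (\<lambda>h. h \<bullet> g')) (at x)"
  hence "(\<lambda>h. h \<bullet> g') = (\<lambda>h. h \<bullet> g)" using assms has_derivative_unique by blast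
  thus "g' = g" by (metis vector_eq_ldot)
qed (fact assms)

lemma has_derivative_grad:
  assumes "f differentiable (at x)"
  shows "(f has_derivative (\<lambda>h. h \<bullet> grad f x)) (at x)"
proof -
  obtain D where D: "(f has_derivative D) (at x)" using assms differentiable_def by blast
  hence "D = (\<lambda>h. h \<bullet> (\<chi> i. D (axis i 1)))"
    using has_derivative_linear linear_eq_inner_axis_image by blast
  with D show ?thesis using grad_eqI by metis
qed

lemma Hess_eqI:
  assumes "(grad f has_derivative (\<lambda>h. M *v h)) (at x)"
  shows "Hess f x = M"
  unfolding Hess_def
proof (rule the_equality)
  fix M' assume "(grad f has_derivative (\<lambda>h. M' *v h)) (at x)"
  hence "(\<lambda>h. M' *v h) = (\<lambda>h. M *v h)" using assms has_derivative_unique by blast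
  thus "M' = M" by (metis matrix_eq)
qed (fact assms)

lemma has_derivative_Hess:
  assumes "grad f differentiable (at x)"
  shows "(grad f has_derivative (\<lambda>h. Hess f x *v h)) (at x)"
proof -
  obtain D where D: "(grad f has_derivative D) (at x)" using assms differentiable_def by blast
  hence "D = (\<lambda>h. matrix D *v h)"
    by (simp add: has_derivative_linear matrix_vector_mul)
  with D show ?thesis using Hess_eqI by metis
qed

lemma C2_has_derivative_grad: "C2 f \<Longrightarrow> (f has_derivative (\<lambda>h. h \<bullet> grad f x)) (at x)"
  unfolding C2_def using has_derivative_grad by blast

lemma C2_has_derivative_Hess: "C2 f \<Longrightarrow> (grad f has_derivative (\<lambda>h. Hess f x *v h)) (at x)"
  unfolding C2_def using has_derivative_Hess by blast

lemma C2_continuous_grad: "C2 f \<Longrightarrow> continuous_on UNIV (grad f)"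
  unfolding C2_def
  by (meson continuous_at_imp_continuous_on differentiable_imp_continuous_within)

lemma C2_continuous_Hess: "C2 f \<Longrightarrow> continuous_on UNIV (Hess f)"
  unfolding C2_def by blast

lemma continuous_on_matrix_vector_mult:
  fixes A :: "'a::topological_space \<Rightarrow> real^'n^'m"
  assumes "continuous_on S A" "continuous_on S b"
  shows "continuous_on S (\<lambda>y. A y *v b y)"
proof -
  have "continuous_on S (\<lambda>y. \<chi> i. \<Sum>j\<in>UNIV. A y $ i $ j * b y $ j)"
    by (intro continuous_on_vec_lambda continuous_intros continuous_on_component assms)
  thus ?thesis by (simp add: matrix_vector_mult_def)
qed

lemma has_derivative_along_line:
  assumes "(f has_derivative (\<lambda>h. h \<bullet> g)) (at (x + s *\<^sub>R d))"
  shows "((\<lambda>s. f (x + s *\<^sub>R d)) has_real_derivative (d \<bullet> g)) (at s)"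
proof -
  have "((\<lambda>s. x + s *\<^sub>R d) has_derivative (\<lambda>s. s *\<^sub>R d)) (at s)"
    by (auto intro!: derivative_eq_intros)
  from has_derivative_compose[OF this assms] show ?thesis
    by (simp add: has_field_derivative_def mult_commute_abs)
qed

lemma has_derivative_inner_along_line:
  fixes F :: "real^'n \<Rightarrow> real^'n"
  assumes "(F has_derivative (\<lambda>h. M *v h)) (at (x + s *\<^sub>R d))"
  shows "((\<lambda>s. d \<bullet> F (x + s *\<^sub>R d)) has_real_derivative (d \<bullet> (M *v d))) (at s)"
proof -
  have "((\<lambda>s. x + s *\<^sub>R d) has_derivative (\<lambda>s. s *\<^sub>R d)) (at s)"
    by (auto intro!: derivative_eq_intros)
  from has_derivative_inner_right[OF has_derivative_compose[OF this assms], of d]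
  show ?thesis by (simp add: has_field_derivative_def matrix_vector_mult_scaleR mult_commute_abs)
qed

section \<open>Symmetry of the Hessian\<close>

lemma second_difference_eq_Hess:
  fixes f :: "real^'n \<Rightarrow> real"
  assumes "C2 f" "t > 0"
  shows "\<exists>p. dist p x \<le> t * (norm h + norm k) \<and>
     f (x + t *\<^sub>R h + t *\<^sub>R k) - f (x + t *\<^sub>R h) - f (x + t *\<^sub>R k) + f x
       = t\<^sup>2 * (h \<bullet> (Hess f p *v k))"
proof -
  define u where "u \<sigma> = f (x + t *\<^sub>R k + \<sigma> *\<^sub>R h) - f (x + \<sigma> *\<^sub>R h)" for \<sigma>
  define u' where "u' \<sigma> = h \<bullet> grad f (x + t *\<^sub>R k + \<sigma> *\<^sub>R h) - h \<bullet> grad f (x + \<sigma> *\<^sub>R h)" for \<sigma>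
  have du: "(u has_real_derivative u' \<sigma>) (at \<sigma>)" for \<sigma>
    unfolding u_def u'_def
    by (intro DERIV_diff has_derivative_along_line C2_has_derivative_grad assms(1))
  obtain \<sigma> where \<sigma>: "0 < \<sigma>" "\<sigma> < t" "u t - u 0 = t * u' \<sigma>"
    using MVT2[OF assms(2) du] by auto
  define w where "w \<tau> = h \<bullet> grad f (x + \<sigma> *\<^sub>R h + \<tau> *\<^sub>R k)" for \<tau>
  have dw: "(w has_real_derivative h \<bullet> (Hess f (x + \<sigma> *\<^sub>R h + \<tau> *\<^sub>R k) *v k)) (at \<tau>)" for \<tau>
  proof -
    have "((\<lambda>\<tau>. x + \<sigma> *\<^sub>R h + \<tau> *\<^sub>R k) has_derivative (\<lambda>s. s *\<^sub>R k)) (at \<tau>)"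
      by (auto intro!: derivative_eq_intros)
    from has_derivative_inner_right[OF
        has_derivative_compose[OF this C2_has_derivative_Hess[OF assms(1)]], of h]
    show ?thesis
      unfolding w_def by (simp add: has_field_derivative_def matrix_vector_mult_scaleR mult_commute_abs)
  qed
  obtain \<tau> where \<tau>: "0 < \<tau>" "\<tau> < t" "w t - w 0 = t * (h \<bullet> (Hess f (x + \<sigma> *\<^sub>R h + \<tau> *\<^sub>R k) *v k))"
    using MVT2[OF assms(2) dw] by auto
  define p where "p = x + \<sigma> *\<^sub>R h + \<tau> *\<^sub>R k"
  have "dist p x \<le> \<sigma> * norm h + \<tau> * norm k"
    using \<sigma> \<tau> norm_triangle_ineq[of "\<sigma> *\<^sub>R h" "\<tau> *\<^sub>R k"] by (simp add: p_def dist_norm)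
  also have "\<dots> \<le> t * (norm h + norm k)"
    using \<sigma> \<tau> by (simp add: distrib_left add_mono mult_right_mono)
  finally have "dist p x \<le> t * (norm h + norm k)" .
  moreover have "f (x + t *\<^sub>R h + t *\<^sub>R k) - f (x + t *\<^sub>R h) - f (x + t *\<^sub>R k) + f x = u t - u 0"
    by (simp add: u_def add.commute add.left_commute)
  moreover have "u t - u 0 = t * (w t - w 0)"
    using \<sigma>(3) by (simp add: u'_def w_def add.commute add.left_commute)
  ultimately show ?thesis
    using \<tau>(3) unfolding p_def power2_eq_square by (metis mult.assoc)
qed

lemma Hess_symmetric:
  fixes f :: "real^'n \<Rightarrow> real"
  assumes "C2 f"
  shows "k \<bullet> (Hess f x *v h) = h \<bullet> (Hess f x *v k)"
proof (rule ccontr)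
  define a where "a y = k \<bullet> (Hess f y *v h)" for y
  define b where "b y = h \<bullet> (Hess f y *v k)" for y
  assume "k \<bullet> (Hess f x *v h) \<noteq> h \<bullet> (Hess f x *v k)"
  hence "a x \<noteq> b x" by (simp add: a_def b_def)
  define e where "e = \<bar>a x - b x\<bar> / 2"
  have e: "e > 0" using \<open>a x \<noteq> b x\<close> by (simp add: e_def)
  have "continuous_on UNIV a" "continuous_on UNIV b" unfolding a_def b_def
    by (intro continuous_intros continuous_on_matrix_vector_mult C2_continuous_Hess[OF assms])+
  then obtain da db where "da > 0" "\<And>y. dist y x < da \<Longrightarrow> dist (a y) (a x) < e"
    and "db > 0" "\<And>y. dist y x < db \<Longrightarrow> dist (b y) (b x) < e"
    using e by (metis UNIV_I continuous_on_iff)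
  then obtain d where d: "d > 0" "\<And>y. dist y x < d \<Longrightarrow> dist (a y) (a x) < e \<and> dist (b y) (b x) < e"
    by (metis min_less_iff_conj min.strict_boundedE)
  define t where "t = d / (2 * (norm h + norm k + 1))"
  have pos: "norm h + norm k + 1 > 0" by (smt (verit) norm_ge_zero)
  hence t: "t > 0" using d by (simp add: t_def)
  have close: "t * (norm h + norm k) < d"
  proof -
    have "t * (norm h + norm k) \<le> t * (norm h + norm k + 1)" using t by simp
    also have "\<dots> = d / 2" using pos by (simp add: t_def field_simps)
    finally show ?thesis using d by linarith
  qed
  obtain p where p: "dist p x \<le> t * (norm h + norm k)"
    "f (x + t *\<^sub>R h + t *\<^sub>R k) - f (x + t *\<^sub>R h) - f (x + t *\<^sub>R k) + f x = t\<^sup>2 * b p"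
    using second_difference_eq_Hess[OF assms t, of x h k] unfolding b_def by blast
  obtain q where q: "dist q x \<le> t * (norm k + norm h)"
    "f (x + t *\<^sub>R k + t *\<^sub>R h) - f (x + t *\<^sub>R k) - f (x + t *\<^sub>R h) + f x = t\<^sup>2 * a q"
    using second_difference_eq_Hess[OF assms t, of x k h] unfolding a_def by blast
  have "t\<^sup>2 * b p = t\<^sup>2 * a q" using p(2) q(2) by (simp add: algebra_simps)
  with t have "b p = a q" by simp
  moreover have "dist (b p) (b x) < e" using d(2)[of p] close p(1) by linarith
  moreover have "dist (a q) (a x) < e" using d(2)[of q] close q(1) by (simp add: add.commute)
  ultimately have "\<bar>a x - b x\<bar> < 2 * e" by (simp add: dist_real_def)
  thus False by (simp add: e_def)
qed

section \<open>Convexity and the Hessian\<close>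

lemma convex_on_along_line:
  fixes f :: "'a::real_vector \<Rightarrow> real"
  assumes "convex_on UNIV f"
  shows "convex_on UNIV (\<lambda>s. f (x + s *\<^sub>R d))"
proof (rule convex_onI)
  fix t a b :: real assume t: "0 < t" "t < 1"
  have "x + ((1 - t) *\<^sub>R a + t *\<^sub>R b) *\<^sub>R d = (1 - t) *\<^sub>R (x + a *\<^sub>R d) + t *\<^sub>R (x + b *\<^sub>R d)"
    by (simp add: algebra_simps)
  thus "f (x + ((1 - t) *\<^sub>R a + t *\<^sub>R b) *\<^sub>R d) \<le> (1 - t) * f (x + a *\<^sub>R d) + t * f (x + b *\<^sub>R d)"
    using convex_onD[OF assms, of t] t by simp
qed simp

lemma convex_on_if_convex_on_lines:
  fixes f :: "'a::real_vector \<Rightarrow> real"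
  assumes "\<And>x d. convex_on UNIV (\<lambda>s. f (x + s *\<^sub>R d))"
  shows "convex_on UNIV f"
proof (rule convex_onI)
  fix t :: real and x y :: 'a assume t: "0 < t" "t < 1"
  have "f (x + ((1 - t) *\<^sub>R 0 + t *\<^sub>R 1) *\<^sub>R (y - x))
      \<le> (1 - t) * f (x + 0 *\<^sub>R (y - x)) + t * f (x + 1 *\<^sub>R (y - x))"
    using convex_onD[OF assms[of x "y - x"], of t 0 1] t by simp
  moreover have "x + t *\<^sub>R (y - x) = (1 - t) *\<^sub>R x + t *\<^sub>R y" by (simp add: algebra_simps)
  ultimately show "f ((1 - t) *\<^sub>R x + t *\<^sub>R y) \<le> (1 - t) * f x + t * f y" by simp
qed simp

lemma convex_on_imp_mono_derivative:
  fixes g g' :: "real \<Rightarrow> real"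
  assumes "convex_on UNIV g" "\<And>s. (g has_real_derivative g' s) (at s)"
  shows "mono g'"
proof (rule monoI)
  fix a b :: real assume "a \<le> b"
  have "g b - g a \<ge> g' a * (b - a)" "g a - g b \<ge> g' b * (a - b)"
    by (rule convex_on_imp_above_tangent[OF assms(1)];
        auto intro: has_field_derivative_at_within assms(2))+
  hence "(g' b - g' a) * (b - a) \<ge> 0" by (simp add: algebra_simps)
  thus "g' a \<le> g' b" using \<open>a \<le> b\<close> by (cases "a = b") (auto simp: zero_le_mult_iff)
qed

lemma convex_on_imp_Hess_psd:
  fixes f :: "real^'n \<Rightarrow> real"
  assumes "convex_on UNIV f" "C2 f"
  shows "h \<bullet> (Hess f x *v h) \<ge> 0"
proof -
  have "mono (\<lambda>s. h \<bullet> grad f (x + s *\<^sub>R h))"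
    by (rule convex_on_imp_mono_derivative[OF convex_on_along_line[OF assms(1)]])
      (rule has_derivative_along_line[OF C2_has_derivative_grad[OF assms(2)]])
  moreover have "((\<lambda>s. h \<bullet> grad f (x + s *\<^sub>R h)) has_real_derivative h \<bullet> (Hess f x *v h)) (at 0)"
    using has_derivative_inner_along_line[OF C2_has_derivative_Hess[OF assms(2)], where x = x and s = 0 and d = h]
    by simp
  ultimately show ?thesis by (rule mono_on_imp_deriv_nonneg) simp
qed

lemma psd_derivative_imp_convex_on:
  fixes \<phi> :: "real^'n \<Rightarrow> real"
  assumes "\<And>x. (\<phi> has_derivative (\<lambda>h. h \<bullet> F x)) (at x)"
    and "\<And>x. (F has_derivative (\<lambda>h. M x *v h)) (at x)"
    and "\<And>x h. h \<bullet> (M x *v h) \<ge> 0"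
  shows "convex_on UNIV \<phi>"
proof (rule convex_on_if_convex_on_lines)
  fix x d :: "real^'n"
  show "convex_on UNIV (\<lambda>s. \<phi> (x + s *\<^sub>R d))"
    by (rule f''_ge0_imp_convex[where f' = "\<lambda>s. d \<bullet> F (x + s *\<^sub>R d)"])
      (auto intro: has_derivative_along_line has_derivative_inner_along_line assms)
qed

section \<open>Vector fields with symmetric Jacobian are gradients\<close>

definition radial_potential :: "(real^'n \<Rightarrow> real^'n) \<Rightarrow> real^'n \<Rightarrow> real" where
  "radial_potential F x = integral {0..1} (\<lambda>t. F (t *\<^sub>R x) \<bullet> x)"

lemma has_derivative_radial_integrand:
  fixes F :: "real^'n \<Rightarrow> real^'n"
  assumes "\<And>y. (F has_derivative (\<lambda>h. M y *v h)) (at y)"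
    and "\<And>y h k. k \<bullet> (M y *v h) = h \<bullet> (M y *v k)"
  shows "((\<lambda>x. F (t *\<^sub>R x) \<bullet> x) has_derivative
           (\<lambda>h. h \<bullet> (t *\<^sub>R (M (t *\<^sub>R x) *v x) + F (t *\<^sub>R x)))) (at x)"
proof -
  have "((\<lambda>x. t *\<^sub>R x) has_derivative (\<lambda>h. t *\<^sub>R h)) (at x)"
    by (auto intro!: derivative_eq_intros)
  from has_derivative_inner[OF has_derivative_compose[OF this assms(1)] has_derivative_ident]
  have "((\<lambda>x. F (t *\<^sub>R x) \<bullet> x) has_derivative
      (\<lambda>h. F (t *\<^sub>R x) \<bullet> h + (M (t *\<^sub>R x) *v (t *\<^sub>R h)) \<bullet> x)) (at x)" by simp
  moreover have "(M (t *\<^sub>R x) *v (t *\<^sub>R h)) \<bullet> x = t * (h \<bullet> (M (t *\<^sub>R x) *v x))" for h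
  proof -
    have "(M (t *\<^sub>R x) *v (t *\<^sub>R h)) \<bullet> x = t * (x \<bullet> (M (t *\<^sub>R x) *v h))"
      by (simp add: matrix_vector_mult_scaleR inner_commute)
    thus ?thesis using assms(2) by simp
  qed
  ultimately show ?thesis by (simp add: inner_add_right inner_commute add.commute)
qed

lemma radial_derivative_has_integral:
  fixes F :: "real^'n \<Rightarrow> real^'n"
  assumes "\<And>y. (F has_derivative (\<lambda>h. M y *v h)) (at y)"
  shows "((\<lambda>t. h \<bullet> (t *\<^sub>R (M (t *\<^sub>R x) *v x) + F (t *\<^sub>R x))) has_integral h \<bullet> F x) {0..1}"
proof -
  have "((\<lambda>t. h \<bullet> (t *\<^sub>R F (t *\<^sub>R x))) has_vector_derivative
      h \<bullet> (t *\<^sub>R (M (t *\<^sub>R x) *v x) + F (t *\<^sub>R x))) (at t within {0..1})" for t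
  proof -
    have "((\<lambda>t. t *\<^sub>R x) has_derivative (\<lambda>s. s *\<^sub>R x)) (at t)"
      by (auto intro!: derivative_eq_intros)
    from has_derivative_inner_right[OF
        has_derivative_scaleR[OF has_derivative_ident has_derivative_compose[OF this assms]], of h]
    have "((\<lambda>t. h \<bullet> (t *\<^sub>R F (t *\<^sub>R x))) has_derivative
        (\<lambda>s. h \<bullet> (t *\<^sub>R (M (t *\<^sub>R x) *v (s *\<^sub>R x)) + s *\<^sub>R F (t *\<^sub>R x)))) (at t)"
      by simp
    moreover have "(\<lambda>s. h \<bullet> (t *\<^sub>R (M (t *\<^sub>R x) *v (s *\<^sub>R x)) + s *\<^sub>R F (t *\<^sub>R x)))
        = (\<lambda>s. s *\<^sub>R (h \<bullet> (t *\<^sub>R (M (t *\<^sub>R x) *v x) + F (t *\<^sub>R x))))"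
      by (rule ext) (simp add: matrix_vector_mult_scaleR inner_add_right algebra_simps)
    ultimately show ?thesis
      unfolding has_vector_derivative_def by (simp add: has_derivative_at_withinI)
  qed
  from fundamental_theorem_of_calculus[OF _ this] show ?thesis by simp
qed

text \<open>A Poincare lemma: differentiate under the integral sign (Leibniz rule) and integrate
  the radial derivative of \<open>t F(t x)\<close>.\<close>
lemma has_derivative_radial_potential:
  fixes F :: "real^'n \<Rightarrow> real^'n" and M :: "real^'n \<Rightarrow> real^'n^'n"
  assumes dF: "\<And>y. (F has_derivative (\<lambda>h. M y *v h)) (at y)"
    and cM: "continuous_on UNIV M"
    and sym: "\<And>y h k. k \<bullet> (M y *v h) = h \<bullet> (M y *v k)"
  shows "(radial_potential F has_derivative (\<lambda>h. h \<bullet> F x)) (at x)"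
proof -
  define w where "w y t = t *\<^sub>R (M (t *\<^sub>R y) *v y) + F (t *\<^sub>R y)" for y and t :: real
  have cF: "continuous_on UNIV F"
    using dF by (meson continuous_at_imp_continuous_on has_derivative_continuous)
  have cw: "continuous_on (UNIV \<times> {0..1}) (\<lambda>(y, t). w y t)"
  proof -
    have ray: "continuous_on (UNIV \<times> {0..1::real}) (\<lambda>p::(real^'n) \<times> real. snd p *\<^sub>R fst p)"
      by (intro continuous_intros)
    have "continuous_on (UNIV \<times> {0..1::real})
        (\<lambda>p. snd p *\<^sub>R (M (snd p *\<^sub>R fst p) *v fst p) + F (snd p *\<^sub>R fst p))"
      by (intro continuous_intros continuous_on_matrix_vector_mult
          continuous_on_compose2[OF cM ray] continuous_on_compose2[OF cF ray]) auto
    thus ?thesis by (simp add: w_def case_prod_beta)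
  qed
  hence cont_inner: "continuous_on (UNIV \<times> {0..1}) (\<lambda>(y, t). blinfun_inner_left (w y t))"
    using bounded_linear.continuous_on[OF bounded_linear_blinfun_inner_left]
    by (simp add: case_prod_beta)
  have "((\<lambda>y. integral (cbox 0 1) (\<lambda>t. F (t *\<^sub>R y) \<bullet> y)) has_derivative
      integral (cbox 0 1) (\<lambda>t. blinfun_inner_left (w x t))) (at x within UNIV)"
  proof (rule leibniz_rule[where f = "\<lambda>y t. F (t *\<^sub>R y) \<bullet> y"])
    show "((\<lambda>y. F (t *\<^sub>R y) \<bullet> y) has_derivative blinfun_apply (blinfun_inner_left (w y t)))
        (at y within UNIV)" for y t
      using has_derivative_radial_integrand[OF dF sym] by (simp add: w_def inner_commute)
    have "continuous_on {0..1} (\<lambda>t. F (t *\<^sub>R y) \<bullet> y)" for y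
      by (intro continuous_intros continuous_on_compose2[OF cF]) auto
    thus "(\<lambda>t. F (t *\<^sub>R y) \<bullet> y) integrable_on cbox 0 1" for y
      by (simp add: integrable_continuous_real)
  qed (use cont_inner in auto)
  moreover have "blinfun_apply (integral {0..1} (\<lambda>t. blinfun_inner_left (w x t))) = (\<lambda>h. h \<bullet> F x)"
  proof
    fix h
    have "continuous_on {0..1::real} (Pair x)" by (intro continuous_intros)
    from continuous_on_compose2[OF cw this] have "continuous_on {0..1} (w x)" by auto
    from bounded_linear.continuous_on[OF bounded_linear_blinfun_inner_left this]
    have "continuous_on {0..1} (\<lambda>t. blinfun_inner_left (w x t))" .
    hence "blinfun_apply (integral {0..1} (\<lambda>t. blinfun_inner_left (w x t))) h
        = integral {0..1} (\<lambda>t. h \<bullet> w x t)"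
      by (simp add: blinfun_apply_integral integrable_continuous_real inner_commute)
    also have "\<dots> = h \<bullet> F x"
      using radial_derivative_has_integral[OF dF] by (simp add: w_def integral_unique)
    finally show "blinfun_apply (integral {0..1} (\<lambda>t. blinfun_inner_left (w x t))) h = h \<bullet> F x" .
  qed
  ultimately show ?thesis by (simp add: radial_potential_def[abs_def])
qed

section \<open>The radial map\<close>

definition radial_map :: "(real \<Rightarrow> real) \<Rightarrow> 'a::real_normed_vector \<Rightarrow> 'a" where
  "radial_map G v = (G (norm v) / norm v) *\<^sub>R v"

text \<open>The continuous extension of \<open>G s / s\<close> to \<open>s = 0\<close> when \<open>G 0 = 0\<close>.\<close>
definition radial_ratio :: "(real \<Rightarrow> real) \<Rightarrow> real \<Rightarrow> real" where
  "radial_ratio G s = (if s = 0 then deriv G 0 else G s / s)"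

definition radial_defect :: "(real \<Rightarrow> real) \<Rightarrow> 'a::real_normed_vector \<Rightarrow> real" where
  "radial_defect G v = (if v = 0 then 0 else (norm v * deriv G (norm v) - G (norm v)) / norm v ^ 3)"

lemma C1_real_has_real_derivative: "C1_real G \<Longrightarrow> (G has_real_derivative deriv G s) (at s)"
  unfolding C1_real_def using DERIV_deriv_iff_real_differentiable by blast

lemma C1_real_isCont: "C1_real G \<Longrightarrow> isCont G s"
  using C1_real_has_real_derivative DERIV_isCont by blast

lemma C1_real_isCont_deriv: "C1_real G \<Longrightarrow> isCont (deriv G) s"
  unfolding C1_real_def by (simp add: continuous_on_eq_continuous_at)

lemma mono_C1_real_deriv_nonneg: "mono G \<Longrightarrow> C1_real G \<Longrightarrow> deriv G s \<ge> 0"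
  using mono_on_imp_deriv_nonneg[of UNIV G] C1_real_has_real_derivative by auto

lemma radial_map_eq: "radial_map G v = radial_ratio G (norm v) *\<^sub>R v"
  by (simp add: radial_map_def radial_ratio_def)

lemma isCont_radial_ratio:
  assumes "C1_real G" "G 0 = 0"
  shows "isCont (radial_ratio G) s"
proof (cases "s = 0")
  case True
  have "((\<lambda>y. (G y - G 0) / (y - 0)) \<longlongrightarrow> deriv G 0) (at 0)"
    using C1_real_has_real_derivative[OF assms(1)] has_field_derivative_iff by blast
  hence "((\<lambda>y. G y / y) \<longlongrightarrow> deriv G 0) (at 0)" using assms(2) by simp
  hence "(radial_ratio G \<longlongrightarrow> deriv G 0) (at 0)"
    by (rule Lim_transform_eventually) (auto simp: radial_ratio_def eventually_at_filter)
  thus ?thesis using True by (simp add: isCont_def radial_ratio_def)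
next
  case False
  have "isCont (\<lambda>s. G s / s) s" using False
    by (intro continuous_intros C1_real_isCont[OF assms(1)]) auto
  moreover have "\<forall>\<^sub>F y in nhds s. G y / y = radial_ratio G y"
  proof -
    have "\<forall>\<^sub>F y in nhds s. y \<noteq> 0" using False by (rule t1_space_nhds)
    thus ?thesis by eventually_elim (simp add: radial_ratio_def)
  qed
  ultimately show ?thesis by (simp add: isCont_cong)
qed

lemma has_derivative_radial_map_nonzero:
  fixes v :: "'a::real_inner"
  assumes "C1_real G" "v \<noteq> 0"
  shows "(radial_map G has_derivative
           (\<lambda>h. radial_ratio G (norm v) *\<^sub>R h + (radial_defect G v * (v \<bullet> h)) *\<^sub>R v)) (at v)"
proof -
  define r where "r = norm v"
  have r: "r > 0" using assms(2) by (simp add: r_def)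
  define q where "q = (deriv G r * r - G r) / r\<^sup>2"
  have "((\<lambda>s. G s / s) has_real_derivative q) (at r)"
    using DERIV_divide[OF C1_real_has_real_derivative[OF assms(1)] DERIV_ident] r
    by (simp add: q_def power2_eq_square)
  from has_derivative_compose[OF has_derivative_norm[OF assms(2)] this[unfolded has_field_derivative_def r_def]]
  have "((\<lambda>v. G (norm v) / norm v) has_derivative (\<lambda>h. q * (h \<bullet> sgn v))) (at v)"
    by (simp add: r_def)
  from has_derivative_scaleR[OF this has_derivative_ident]
  have "(radial_map G has_derivative (\<lambda>h. (G r / r) *\<^sub>R h + (q * (h \<bullet> sgn v)) *\<^sub>R v)) (at v)"
    by (simp add: radial_map_def[abs_def] r_def)
  moreover have "q * (h \<bullet> sgn v) = radial_defect G v * (v \<bullet> h)" for h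
    using r assms(2) unfolding radial_defect_def q_def r_def sgn_div_norm
    by (simp add: inner_commute power3_eq_cube power2_eq_square field_simps)
  ultimately show ?thesis using r by (simp add: radial_ratio_def r_def)
qed

lemma has_derivative_radial_map_zero:
  assumes "C1_real G" "G 0 = 0"
  shows "(radial_map G has_derivative (\<lambda>h. deriv G 0 *\<^sub>R h)) (at (0::'a::real_inner))"
  unfolding has_derivative_at
proof (intro conjI bounded_linear_scaleR_right)
  have "isCont (\<lambda>h::'a. radial_ratio G (norm h)) 0"
    by (intro continuous_at_compose[unfolded o_def, OF continuous_norm isCont_radial_ratio[OF assms]]
        continuous_ident)
  hence "((\<lambda>h::'a. \<bar>radial_ratio G (norm h) - deriv G 0\<bar>) \<longlongrightarrow> 0) (at 0)"
    by (intro tendsto_rabs_zero LIM_zero) (simp add: isCont_def radial_ratio_def)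
  thus "((\<lambda>h::'a. norm (radial_map G (0 + h) - radial_map G 0 - deriv G 0 *\<^sub>R h) / norm h)
      \<longlongrightarrow> 0) (at 0)"
  proof (rule Lim_transform_eventually)
    have "\<bar>radial_ratio G (norm h) - deriv G 0\<bar>
        = norm (radial_map G (0 + h) - radial_map G 0 - deriv G 0 *\<^sub>R h) / norm h"
      if "h \<noteq> 0" for h :: 'a
      using that by (simp add: radial_map_eq scaleR_diff_left[symmetric])
    thus "\<forall>\<^sub>F h in at (0::'a). \<bar>radial_ratio G (norm h) - deriv G 0\<bar>
        = norm (radial_map G (0 + h) - radial_map G 0 - deriv G 0 *\<^sub>R h) / norm h"
      by (simp add: eventually_at_filter)
  qed
qed

lemma has_derivative_radial_map:
  fixes v :: "'a::real_inner"
  assumes "C1_real G" "G 0 = 0"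
  shows "(radial_map G has_derivative
           (\<lambda>h. radial_ratio G (norm v) *\<^sub>R h + (radial_defect G v * (v \<bullet> h)) *\<^sub>R v)) (at v)"
proof (cases "v = 0")
  case True
  thus ?thesis using has_derivative_radial_map_zero[OF assms]
    by (simp add: radial_ratio_def radial_defect_def)
qed (rule has_derivative_radial_map_nonzero[OF assms(1)])

lemma radial_defect_mult_inner_self:
  "radial_defect G v * (v \<bullet> v) = deriv G (norm v) - radial_ratio G (norm v)"
  by (cases "v = 0")
    (simp_all add: radial_defect_def radial_ratio_def power2_norm_eq_inner[symmetric]
      power3_eq_cube power2_eq_square field_simps)

text \<open>The matrix of \<open>h \<mapsto> D(radial_map G)(v) (H h)\<close>, cf. \<open>has_derivative_radial_map\<close>.\<close>
definition radial_jacobian :: "(real \<Rightarrow> real) \<Rightarrow> real^'n \<Rightarrow> real^'n^'n \<Rightarrow> real^'n^'n" where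
  "radial_jacobian G v H =
     (\<chi> i j. radial_ratio G (norm v) * H$i$j + (\<Sum>l\<in>UNIV. radial_defect G v * v$i * v$l * H$l$j))"

lemma radial_jacobian_mult:
  "radial_jacobian G v H *v h
     = radial_ratio G (norm v) *\<^sub>R (H *v h) + (radial_defect G v * (v \<bullet> (H *v h))) *\<^sub>R v"
proof -
  have "(\<Sum>j\<in>UNIV. \<Sum>l\<in>UNIV. radial_defect G v * v$i * v$l * H$l$j * h$j)
      = radial_defect G v * v$i * (\<Sum>l\<in>UNIV. v$l * (\<Sum>j\<in>UNIV. H$l$j * h$j))" for i
    by (subst sum.swap) (simp add: sum_distrib_left algebra_simps)
  thus ?thesis
    by (simp add: vec_eq_iff radial_jacobian_def matrix_vector_mult_def inner_vec_def
        sum.distrib sum_distrib_left sum_distrib_right algebra_simps)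
qed

text \<open>At \<open>v = 0\<close> continuity holds because \<open>|radial_defect G v| |v|\<^sup>2 = |G'(|v|) - G(|v|)/|v|| \<rightarrow> 0\<close>.\<close>
lemma isCont_radial_defect_mult_components:
  assumes G: "C1_real G" "G 0 = 0"
  shows "isCont (\<lambda>v::real^'n. radial_defect G v * v$i * v$l) v0"
proof -
  have dG: "isCont (\<lambda>v::real^'n. deriv G (norm v)) v" for v
    by (rule isCont_o2[OF continuous_norm[OF continuous_ident] C1_real_isCont_deriv[OF G(1)]])
  show ?thesis
  proof (cases "v0 = 0")
    case False
    have "isCont (\<lambda>v::real^'n. G (norm v)) v0"
      by (rule isCont_o2[OF continuous_norm[OF continuous_ident] C1_real_isCont[OF G(1)]])
    with False dG
    have "isCont (\<lambda>v::real^'n. (norm v * deriv G (norm v) - G (norm v)) / norm v ^ 3 * v$i * v$l) v0"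
      by (intro continuous_intros) auto
    moreover have "\<forall>\<^sub>F v in nhds v0. v \<noteq> 0" using False by (rule t1_space_nhds)
    hence "\<forall>\<^sub>F v in nhds v0. (norm v * deriv G (norm v) - G (norm v)) / norm v ^ 3 * v$i * v$l
        = radial_defect G v * v$i * v$l"
      by eventually_elim (simp add: radial_defect_def)
    ultimately show ?thesis by (simp add: isCont_cong)
  next
    case True
    define g where "g v = \<bar>deriv G (norm v) - radial_ratio G (norm v)\<bar>" for v :: "real^'n"
    have "isCont (\<lambda>v::real^'n. radial_ratio G (norm v)) 0"
      by (rule isCont_o2[OF continuous_norm[OF continuous_ident] isCont_radial_ratio[OF G]])
    with dG have "isCont g 0" unfolding g_def by (intro continuous_intros)
    have "((\<lambda>v::real^'n. radial_defect G v * v$i * v$l) \<longlongrightarrow> 0) (at 0)"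
    proof (rule Lim_null_comparison)
      show "(g \<longlongrightarrow> 0) (at 0)"
        using \<open>isCont g 0\<close> by (simp add: isCont_def g_def radial_ratio_def)
      have "norm (radial_defect G v * v$i * v$l) \<le> g v" for v :: "real^'n"
      proof -
        have "\<bar>v$i * v$l\<bar> \<le> norm v * norm v"
          unfolding abs_mult by (intro mult_mono component_le_norm_cart) auto
        hence "norm (radial_defect G v * v$i * v$l) \<le> \<bar>radial_defect G v\<bar> * (norm v * norm v)"
          by (simp add: abs_mult mult_left_mono mult.assoc)
        also have "\<dots> = \<bar>radial_defect G v * (v \<bullet> v)\<bar>"
          by (simp add: abs_mult power2_norm_eq_inner[symmetric] power2_eq_square)
        also have "\<dots> = g v" by (simp add: g_def radial_defect_mult_inner_self)
        finally show ?thesis .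
      qed
      thus "\<forall>\<^sub>F v in at 0. norm (radial_defect G v * v$i * v$l) \<le> g v" by simp
    qed
    thus ?thesis using True by (simp add: isCont_def radial_defect_def)
  qed
qed

lemma continuous_on_radial_jacobian:
  fixes v :: "'a::topological_space \<Rightarrow> real^'n" and H :: "'a \<Rightarrow> real^'n^'n"
  assumes G: "C1_real G" "G 0 = 0" and "continuous_on UNIV v" "continuous_on UNIV H"
  shows "continuous_on UNIV (\<lambda>x. radial_jacobian G (v x) (H x))"
proof -
  have "continuous_on UNIV (radial_ratio G)"
    by (intro continuous_at_imp_continuous_on ballI isCont_radial_ratio[OF G])
  from continuous_on_compose2[OF this continuous_on_norm[OF assms(3)]]
  have c1: "continuous_on UNIV (\<lambda>x. radial_ratio G (norm (v x)))" by simp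
  have "continuous_on UNIV (\<lambda>v. radial_defect G v * v$i * v$l)" for i l
    by (intro continuous_at_imp_continuous_on ballI isCont_radial_defect_mult_components[OF G])
  from continuous_on_compose2[OF this assms(3)]
  have c2: "continuous_on UNIV (\<lambda>x. radial_defect G (v x) * v x $ i * v x $ l)" for i l by simp
  have c3: "continuous_on UNIV (\<lambda>x. H x $ i $ j)" for i j
    by (intro continuous_on_component assms(4))
  show ?thesis unfolding radial_jacobian_def
    by (intro continuous_on_vec_lambda continuous_on_add continuous_on_sum; rule continuous_on_mult)
      (use c1 c2 c3 in auto)
qed

lemma radial_jacobian_symmetric:
  assumes "\<And>h k. k \<bullet> (H *v h) = h \<bullet> (H *v k)" "H *v v = c *\<^sub>R v"
  shows "k \<bullet> (radial_jacobian G v H *v h) = h \<bullet> (radial_jacobian G v H *v k)"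
proof -
  have "v \<bullet> (H *v h) = c * (h \<bullet> v)" for h using assms by (metis inner_scaleR_right)
  thus ?thesis using assms(1)[of h k]
    by (simp add: radial_jacobian_mult inner_add_right inner_commute)
qed

lemma radial_jacobian_psd:
  fixes v :: "real^'n" and H :: "real^'n^'n"
  assumes G: "mono G" "C1_real G" "G 0 = 0"
    and H: "\<And>h k. k \<bullet> (H *v h) = h \<bullet> (H *v k)" "\<And>h. h \<bullet> (H *v h) \<ge> 0"
    and Hv: "H *v v = c *\<^sub>R v"
  shows "h \<bullet> (radial_jacobian G v H *v h) \<ge> 0"
proof (cases "v = 0")
  case True
  thus ?thesis using H(2)[of h] mono_C1_real_deriv_nonneg[OF G(1,2), of 0]
    by (simp add: radial_jacobian_mult radial_ratio_def)
next
  case False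
  define s where "s = v \<bullet> h"
  define X where "X = h \<bullet> (H *v h)"
  define n where "n = v \<bullet> v"
  have n: "n > 0" using False by (simp add: n_def)
  have vHh: "v \<bullet> (H *v h) = c * s" using H(1)[of h v] Hv by (simp add: s_def inner_commute)
  have "0 \<le> c * n" using H(2)[of v] by (simp add: Hv n_def)
  hence c: "c \<ge> 0" using n by (simp add: zero_le_mult_iff)
  txt \<open>Positivity of \<open>H\<close> at the component of \<open>h\<close> orthogonal to its eigenvector \<open>v\<close>.\<close>
  have "0 \<le> (h - (s / n) *\<^sub>R v) \<bullet> (H *v (h - (s / n) *\<^sub>R v))" by (rule H(2))
  also have "\<dots> = X - c * s\<^sup>2 / n"
    using vHh Hv n
    by (simp add: matrix_vector_mult_diff_distrib matrix_vector_mult_scaleR inner_diff_left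
        inner_diff_right X_def s_def n_def inner_commute power2_eq_square field_simps)
  finally have X: "X \<ge> c * s\<^sup>2 / n" by simp
  have "radial_ratio G (norm v) \<ge> 0"
    using monoD[OF G(1), of 0 "norm v"] G(3) by (simp add: radial_ratio_def False)
  have "0 \<le> (c * s\<^sup>2 / n) * deriv G (norm v)"
    using c n mono_C1_real_deriv_nonneg[OF G(1,2)] by simp
  also have "\<dots> = radial_ratio G (norm v) * (c * s\<^sup>2 / n) + radial_defect G v * c * s\<^sup>2"
    using radial_defect_mult_inner_self[of G v, symmetric] n by (simp add: n_def field_simps)
  also have "\<dots> \<le> radial_ratio G (norm v) * X + radial_defect G v * c * s\<^sup>2"
    using mult_left_mono[OF X \<open>radial_ratio G (norm v) \<ge> 0\<close>] by simp
  finally show ?thesis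
    by (simp add: radial_jacobian_mult inner_add_right vHh X_def s_def power2_eq_square inner_commute)
qed

lemma radial_jacobian_mult_radial_map:
  assumes "H *v v = c *\<^sub>R v"
  shows "radial_jacobian G v H *v radial_map G v = (c * deriv G (norm v)) *\<^sub>R radial_map G v"
proof -
  have "radial_jacobian G v H *v v
      = (c * (radial_ratio G (norm v) + radial_defect G v * (v \<bullet> v))) *\<^sub>R v"
    using assms by (simp add: radial_jacobian_mult algebra_simps)
  also have "\<dots> = (c * deriv G (norm v)) *\<^sub>R v" by (simp add: radial_defect_mult_inner_self)
  finally show ?thesis by (simp add: radial_map_eq matrix_vector_mult_scaleR)
qed

lemma has_derivative_radial_map_grad:
  assumes "C2 f" "C1_real G" "G 0 = 0"
  shows "((\<lambda>y. radial_map G (grad f y)) has_derivative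
           (\<lambda>h. radial_jacobian G (grad f x) (Hess f x) *v h)) (at x)"
  using has_derivative_compose[OF C2_has_derivative_Hess[OF assms(1)] has_derivative_radial_map[OF assms(2,3)]]
  by (simp add: radial_jacobian_mult)

lemma Hess_eq_radial_jacobian:
  assumes "C2 f" "C1_real G" "G 0 = 0" "open U" "x \<in> U"
    and "\<And>y. y \<in> U \<Longrightarrow> grad \<phi> y = radial_map G (grad f y)"
  shows "Hess \<phi> x = radial_jacobian G (grad f x) (Hess f x)"
  by (rule Hess_eqI, rule has_derivative_transform_within_open[OF
        has_derivative_radial_map_grad[OF assms(1-3)] assms(4,5)]) (simp add: assms(6))

section \<open>Part (i): radial reparametrisation preserves the class\<close>

lemma radial_potential_in_classF:
  fixes f :: "real^'n \<Rightarrow> real"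
  assumes f: "f \<in> classF" and G: "mono G" "C1_real G" "G 0 = 0"
  defines "\<phi> \<equiv> radial_potential (\<lambda>x. radial_map G (grad f x))"
  shows "\<phi> \<in> classF" and "grad \<phi> = (\<lambda>x. radial_map G (grad f x))"
proof -
  have cvx: "convex_on UNIV f" and c2: "C2 f"
    and par: "\<And>x. \<exists>c. Hess f x *v grad f x = c *\<^sub>R grad f x"
    using f by (auto simp: classF_def)
  define M where "M x = radial_jacobian G (grad f x) (Hess f x)" for x
  have dF: "((\<lambda>y. radial_map G (grad f y)) has_derivative (\<lambda>h. M x *v h)) (at x)" for x
    unfolding M_def by (rule has_derivative_radial_map_grad[OF c2 G(2,3)])
  have sym: "k \<bullet> (M x *v h) = h \<bullet> (M x *v k)" for x h k
    using par[of x] radial_jacobian_symmetric[OF Hess_symmetric[OF c2]] unfolding M_def by blast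
  have d\<phi>: "(\<phi> has_derivative (\<lambda>h. h \<bullet> radial_map G (grad f x))) (at x)" for x
    unfolding \<phi>_def
    by (rule has_derivative_radial_potential[OF dF _ sym])
      (unfold M_def, rule continuous_on_radial_jacobian[OF G(2,3) C2_continuous_grad[OF c2]
        C2_continuous_Hess[OF c2]])
  show grad\<phi>: "grad \<phi> = (\<lambda>x. radial_map G (grad f x))"
    using grad_eqI[OF d\<phi>] by blast
  have Hess\<phi>: "Hess \<phi> = M"
    using Hess_eq_radial_jacobian[OF c2 G(2,3) open_UNIV] grad\<phi> by (auto simp: M_def)
  have "C2 \<phi>"
    unfolding C2_def Hess\<phi> grad\<phi> M_def
    using d\<phi> dF continuous_on_radial_jacobian[OF G(2,3) C2_continuous_grad[OF c2]
        C2_continuous_Hess[OF c2]]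
    by (auto simp: differentiable_def)
  moreover have "convex_on UNIV \<phi>"
    using psd_derivative_imp_convex_on[OF d\<phi> dF] par radial_jacobian_psd[OF G Hess_symmetric[OF c2]
        convex_on_imp_Hess_psd[OF cvx c2]]
    unfolding M_def by blast
  moreover have "\<exists>c. Hess \<phi> x *v grad \<phi> x = c *\<^sub>R grad \<phi> x" for x
    using par[of x] radial_jacobian_mult_radial_map unfolding Hess\<phi> grad\<phi> M_def by blast
  ultimately show "\<phi> \<in> classF" by (simp add: classF_def)
qed

section \<open>Part (ii): recovering the class from a radial reparametrisation\<close>

lemma parallel_if_radial_jacobian_symmetric:
  fixes v :: "real^'n" and H :: "real^'n^'n"
  assumes "\<And>h k. k \<bullet> (H *v h) = h \<bullet> (H *v k)"
    and "\<And>h k. k \<bullet> (radial_jacobian G v H *v h) = h \<bullet> (radial_jacobian G v H *v k)"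
    and "v \<noteq> 0" "radial_defect G v \<noteq> 0"
  shows "H *v v = ((v \<bullet> (H *v v)) / (v \<bullet> v)) *\<^sub>R v"
proof -
  have "radial_defect G v * ((h \<bullet> (H *v v)) * (v \<bullet> v)) = radial_defect G v * ((v \<bullet> (H *v v)) * (h \<bullet> v))"
    for h
    using assms(2)[of h v] assms(1)[of h v]
    by (simp add: radial_jacobian_mult inner_add_right algebra_simps) (auto simp: mult.commute)
  hence "h \<bullet> (H *v v) = h \<bullet> (((v \<bullet> (H *v v)) / (v \<bullet> v)) *\<^sub>R v)" for h
    using assms(3,4) by (simp add: field_simps)
  thus ?thesis by (metis vector_eq_ldot)
qed

lemma eq_if_connected_image_null:
  fixes r :: "'a::topological_space \<Rightarrow> real"
  assumes "continuous_on S r" "connected S" "r ` S \<subseteq> N" "N \<in> null_sets lborel"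
    and "x \<in> S" "y \<in> S"
  shows "r x = r y"
proof (rule ccontr)
  assume "r x \<noteq> r y"
  define a where "a = min (r x) (r y)"
  define b where "b = max (r x) (r y)"
  have "a < b" using \<open>r x \<noteq> r y\<close> by (simp add: a_def b_def)
  have "{a..b} \<subseteq> r ` S"
    using connected_contains_Icc[OF connected_continuous_image[OF assms(1,2)]] assms(5,6)
    by (auto simp: a_def b_def min_def max_def)
  hence "emeasure lborel {a..b} = 0"
    using assms(3,4) null_sets_subset by (metis atLeastAtMost_borel null_setsD1 order_trans sets_lborel)
  thus False using \<open>a < b\<close> by simp
qed

lemma open_not_parallel:
  fixes A :: "'a::topological_space \<Rightarrow> real^'n^'n" and v :: "'a \<Rightarrow> real^'n"
  assumes "continuous_on UNIV A" "continuous_on UNIV v"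
  shows "open {x. v x \<noteq> 0 \<and> (\<forall>c. A x *v v x \<noteq> c *\<^sub>R v x)}"
proof -
  define U where "U = v -` (- {0})"
  define Q where "Q x = A x *v v x - ((v x \<bullet> (A x *v v x)) / (v x \<bullet> v x)) *\<^sub>R v x" for x
  have "open U"
    unfolding U_def by (rule open_vimage[OF _ assms(2)]) auto
  moreover have "continuous_on U Q"
    unfolding Q_def using continuous_on_subset[OF continuous_on_matrix_vector_mult[OF assms]]
      continuous_on_subset[OF assms(2)]
    by (intro continuous_intros) (auto simp: U_def)
  ultimately have "open (Q -` (- {0}) \<inter> U)"
    by (simp add: continuous_on_open_vimage open_Compl)
  moreover have "v x \<noteq> 0 \<Longrightarrow> (\<exists>c. A x *v v x = c *\<^sub>R v x) \<longleftrightarrow> Q x = 0" for x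
    unfolding Q_def by auto
  hence "{x. v x \<noteq> 0 \<and> (\<forall>c. A x *v v x \<noteq> c *\<^sub>R v x)} = Q -` (- {0}) \<inter> U"
    by (auto simp: U_def)
  ultimately show ?thesis by simp
qed

lemma Hess_grad_eq_0_if_norm_grad_constant:
  fixes f :: "real^'n \<Rightarrow> real"
  assumes "C2 f" "e > 0" "\<And>y. y \<in> ball x e \<Longrightarrow> norm (grad f y) = norm (grad f x)"
  shows "Hess f x *v grad f x = 0"
proof -
  have "((\<lambda>y. grad f y \<bullet> grad f y) has_derivative
      (\<lambda>h. grad f x \<bullet> (Hess f x *v h) + (Hess f x *v h) \<bullet> grad f x)) (at x)"
    by (rule has_derivative_inner[OF C2_has_derivative_Hess[OF assms(1)] C2_has_derivative_Hess[OF assms(1)]])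
  moreover have "((\<lambda>y. grad f y \<bullet> grad f y) has_derivative (\<lambda>h. 0)) (at x)"
  proof (rule has_derivative_transform_within_open[OF has_derivative_const open_ball])
    show "x \<in> ball x e" using assms(2) by simp
    show "grad f x \<bullet> grad f x = grad f y \<bullet> grad f y" if "y \<in> ball x e" for y
      using assms(3)[OF that] by (metis power2_norm_eq_inner)
  qed
  ultimately have "(\<lambda>h. grad f x \<bullet> (Hess f x *v h) + (Hess f x *v h) \<bullet> grad f x) = (\<lambda>h. 0)"
    by (rule has_derivative_unique)
  hence "grad f x \<bullet> (Hess f x *v h) + grad f x \<bullet> (Hess f x *v h) = 0" for h
    by (metis inner_commute)
  hence "grad f x \<bullet> (Hess f x *v h) = 0" for h by (simp add: add_eq_0_iff_both_eq_0)
  thus ?thesis using Hess_symmetric[OF assms(1), of "grad f x" x] by (metis inner_zero_right vector_eq_ldot)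
qed

lemma radial_defect_eq_0_if_not_parallel:
  fixes f \<phi> :: "real^'n \<Rightarrow> real"
  assumes "C2 f" "C2 \<phi>" "C1_real G" "G 0 = 0"
    and "open U" "y \<in> U" "\<And>z. z \<in> U \<Longrightarrow> grad \<phi> z = radial_map G (grad f z)"
    and "grad f y \<noteq> 0" "\<forall>c. Hess f y *v grad f y \<noteq> c *\<^sub>R grad f y"
  shows "radial_defect G (grad f y) = 0"
proof (rule ccontr)
  assume "radial_defect G (grad f y) \<noteq> 0"
  have "Hess \<phi> y = radial_jacobian G (grad f y) (Hess f y)"
    by (rule Hess_eq_radial_jacobian[OF assms(1,3-7)])
  hence "k \<bullet> (radial_jacobian G (grad f y) (Hess f y) *v h)
      = h \<bullet> (radial_jacobian G (grad f y) (Hess f y) *v k)" for h k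
    using Hess_symmetric[OF assms(2), of k y h] by simp
  with \<open>radial_defect G (grad f y) \<noteq> 0\<close> assms(8,9) show False
    using parallel_if_radial_jacobian_symmetric[OF Hess_symmetric[OF assms(1), where x = y],
        where G = G and v = "grad f y"]
    by blast
qed

lemma classF_if_radial_gradient:
  fixes f \<phi> :: "real^'n \<Rightarrow> real"
  assumes f: "convex_on UNIV f" "C2 f" and "C2 \<phi>" and G: "C1_real G" "G 0 = 0"
    and ae: "AE s in lborel. s * deriv G s - G s \<noteq> 0"
    and grad\<phi>: "\<And>x. grad f x \<noteq> 0 \<Longrightarrow> grad \<phi> x = radial_map G (grad f x)"
  shows "f \<in> classF"
proof -
  obtain N where N: "N \<in> null_sets lborel" "{s. s * deriv G s - G s = 0} \<subseteq> N"
    using AE_E[OF ae] by (auto simp: null_sets_def)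
  define W where "W = {x. grad f x \<noteq> 0 \<and> (\<forall>c. Hess f x *v grad f x \<noteq> c *\<^sub>R grad f x)}"
  have "open W"
    unfolding W_def by (rule open_not_parallel[OF C2_continuous_Hess C2_continuous_grad]) (use f in auto)
  have "\<exists>c. Hess f x *v grad f x = c *\<^sub>R grad f x" for x
  proof (rule ccontr)
    assume "\<nexists>c. Hess f x *v grad f x = c *\<^sub>R grad f x"
    hence "x \<in> W" by (force simp: W_def)
    then obtain e where e: "e > 0" "ball x e \<subseteq> W" using \<open>open W\<close> openE by blast
    have "radial_defect G (grad f y) = 0" if "y \<in> ball x e" for y
      using that e \<open>open W\<close>
      by (intro radial_defect_eq_0_if_not_parallel[OF f(2) \<open>C2 \<phi>\<close> G, of W]) (auto simp: W_def grad\<phi>)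
    hence img: "(\<lambda>y. norm (grad f y)) ` ball x e \<subseteq> N"
      using e N(2) by (force simp: W_def radial_defect_def)
    have cont: "continuous_on (ball x e) (\<lambda>y. norm (grad f y))"
      using continuous_on_norm[OF C2_continuous_grad[OF f(2)]] continuous_on_subset by blast
    have "norm (grad f y) = norm (grad f x)" if "y \<in> ball x e" for y
      using eq_if_connected_image_null[OF cont connected_ball img N(1) that] e(1) by simp
    hence "Hess f x *v grad f x = 0 *\<^sub>R grad f x"
      using Hess_grad_eq_0_if_norm_grad_constant[OF f(2) e(1)] by simp
    thus False using \<open>\<nexists>c. Hess f x *v grad f x = c *\<^sub>R grad f x\<close> by blast
  qed
  thus ?thesis using f by (simp add: classF_def)
qed

theorem proposition3p2:
  fixes f :: "real^'n \<Rightarrow> real"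
  assumes "convex_on UNIV f" and "C2 f"
  shows "(f \<in> classF \<longrightarrow>
            (\<forall>G. mono G \<and> C1_real G \<and> G 0 = 0 \<longrightarrow>
              (\<exists>\<phi>\<in>classF.
                 (\<forall>x. grad f x \<noteq> 0 \<longrightarrow>
                    grad \<phi> x = G (norm (grad f x)) *\<^sub>R ((1 / norm (grad f x)) *\<^sub>R grad f x)) \<and>
                 (\<forall>x. grad f x = 0 \<longrightarrow> grad \<phi> x = 0))))
       \<and> ((\<exists>G \<phi>. mono G \<and> C1_real G \<and> convex_on UNIV \<phi> \<and> C2 \<phi> \<and> G 0 = 0 \<and>
              (AE s in lborel. s * deriv G s - G s \<noteq> 0) \<and>
              (\<forall>x. grad f x \<noteq> 0 \<longrightarrow>
                 grad \<phi> x = G (norm (grad f x)) *\<^sub>R ((1 / norm (grad f x)) *\<^sub>R grad f x)))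
          \<longrightarrow> f \<in> classF)"
proof (intro conjI impI allI)
  fix G assume "f \<in> classF" "mono G \<and> C1_real G \<and> G 0 = 0"
  with radial_potential_in_classF[of f G]
  obtain \<phi> where "\<phi> \<in> classF" "grad \<phi> = (\<lambda>x. radial_map G (grad f x))" by blast
  thus "\<exists>\<phi>\<in>classF.
      (\<forall>x. grad f x \<noteq> 0 \<longrightarrow>
         grad \<phi> x = G (norm (grad f x)) *\<^sub>R ((1 / norm (grad f x)) *\<^sub>R grad f x)) \<and>
      (\<forall>x. grad f x = 0 \<longrightarrow> grad \<phi> x = 0)"
    by (intro bexI[of _ \<phi>]) (auto simp: radial_map_def)
next
  assume "\<exists>G \<phi>. mono G \<and> C1_real G \<and> convex_on UNIV \<phi> \<and> C2 \<phi> \<and> G 0 = 0 \<and>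
    (AE s in lborel. s * deriv G s - G s \<noteq> 0) \<and>
    (\<forall>x. grad f x \<noteq> 0 \<longrightarrow>
       grad \<phi> x = G (norm (grad f x)) *\<^sub>R ((1 / norm (grad f x)) *\<^sub>R grad f x))"
  then obtain G and \<phi> :: "real^'n \<Rightarrow> real" where "C1_real G" "C2 \<phi>" "G 0 = 0"
    "AE s in lborel. s * deriv G s - G s \<noteq> 0"
    "\<forall>x. grad f x \<noteq> 0 \<longrightarrow>
       grad \<phi> x = G (norm (grad f x)) *\<^sub>R ((1 / norm (grad f x)) *\<^sub>R grad f x)"
    by blast
  thus "f \<in> classF"
    by (intro classF_if_radial_gradient[OF assms]) (auto simp: radial_map_def)
qed

end
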